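(* For every integer $v \ge 4$, \[ \beta(1,v,4) = \begin{cases} D(v,4) & \text{if } 4 \le v \le 13,\\ 13 & \text{if } 14 \le v \le 39,\\ \left\lfloor \frac{v-1}{3} \right\rfloor & \text{if } v \ge 40. \end{cases} \]
   Context: For integers $v \ge k \ge 2$, a $(v,k)$-packing is a pair $(X,\mathcal{B})$ where $X$ is a set of $v$ points and $\mathcal{B}$ is a set of $k$-subsets of $X$ (blocks) such that every pair of distinct points lies in at most one block. $D(v,k)$ denotes the maximum number of blocks in a $(v,k)$-packing. A partial parallel class (PPC) is a set of pairwise disjoint blocks; its size is the number of blocks. A PPC of size $\rho$ is maximum if the packing has no PPC of size $\rho+1$. $\beta(\rho,v,k)$ denotes the maximum number of blocks in a $(v,k)$-packing in which the maximum PPC has size $\rho$; thus $\beta(1,v,4)$ is the maximum number of blocks in a $(v,4)$-packing in which no two blocks are disjoint. *)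

theory Defs
  imports Main
begin

definition is_packing :: "'a set \<Rightarrow> nat \<Rightarrow> nat \<Rightarrow> 'a set set \<Rightarrow> bool" where
  "is_packing X v k \<B> \<longleftrightarrow> finite X \<and> card X = v \<and>
     (\<forall>B\<in>\<B>. B \<subseteq> X \<and> card B = k) \<and>
     (\<forall>x\<in>X. \<forall>y\<in>X. x \<noteq> y \<longrightarrow> card {B\<in>\<B>. x \<in> B \<and> y \<in> B} \<le> 1)"

definition is_ppc :: "'a set set \<Rightarrow> 'a set set \<Rightarrow> bool" where
  "is_ppc \<B> P \<longleftrightarrow> P \<subseteq> \<B> \<and> (\<forall>B\<in>P. \<forall>C\<in>P. B \<noteq> C \<longrightarrow> B \<inter> C = {})"

definition max_ppc_size :: "'a set set \<Rightarrow> nat" where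
  "max_ppc_size \<B> = Max {card P | P. is_ppc \<B> P}"

text \<open>Packings are taken on the canonical point set {0..<v} (WLOG up to relabelling).\<close>
definition D :: "nat \<Rightarrow> nat \<Rightarrow> nat" where
  "D v k = Max {card \<B> | \<B>. is_packing {..<v} v k \<B>}"

definition beta :: "nat \<Rightarrow> nat \<Rightarrow> nat \<Rightarrow> nat" where
  "beta \<rho> v k = Max {card \<B> | \<B>. is_packing {..<v} v k \<B> \<and> max_ppc_size \<B> = \<rho>}"

end

theory Submission
  imports Defs
begin

text \<open>If all blocks of an intersecting (v,4)-packing pass through one point, removing that point
  leaves pairwise disjoint triples, so there are at most (v-1)/3 blocks. Otherwise every point x
  lies on at most 4 blocks, since the blocks through x meet a block avoiding x in distinct points;
  hence a block meets at most 4 * 3 others and there are at most 13 blocks. A star of triples and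
  the 13 lines of PG(2,3) attain these bounds. For v \<le> 13 every packing with b blocks satisfies
  the second moment bound: the squares of its point degrees sum to at most b(b+3). Combined with
  (d - m)(d - m - 1) \<ge> 0 this yields the values of D(v,4), which are attained by intersecting
  subconfigurations of PG(2,3) and of the five vertex stars of K5.\<close>

lemma is_packing_finite: "is_packing X v k F \<Longrightarrow> finite F"
  unfolding is_packing_def by (meson Pow_iff finite_Pow_iff finite_subset subsetI)

lemma is_packing_finite_block: "is_packing X v k F \<Longrightarrow> B \<in> F \<Longrightarrow> finite B"
  unfolding is_packing_def by (blast intro: finite_subset)

lemma is_packing_card_Int_le_1:
  assumes pk: "is_packing X v k F" and "B \<in> F" "C \<in> F" "B \<noteq> C"
  shows "card (B \<inter> C) \<le> 1"
proof (rule ccontr)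
  assume "\<not> card (B \<inter> C) \<le> 1"
  moreover have "finite (B \<inter> C)" using is_packing_finite_block[OF pk \<open>B \<in> F\<close>] by blast
  ultimately obtain x y where xy: "x \<in> B \<inter> C" "y \<in> B \<inter> C" "x \<noteq> y"
    by (metis One_nat_def card_le_Suc0_iff_eq)
  have "x \<in> X" "y \<in> X" using pk xy \<open>B \<in> F\<close> unfolding is_packing_def by auto
  then have "card {D \<in> F. x \<in> D \<and> y \<in> D} \<le> 1"
    using pk \<open>x \<noteq> y\<close> unfolding is_packing_def by blast
  moreover have "card {B, C} \<le> card {D \<in> F. x \<in> D \<and> y \<in> D}"
    using xy assms is_packing_finite[OF pk] by (intro card_mono) auto
  ultimately show False using \<open>B \<noteq> C\<close> by simp
qed

lemma is_packing_subset:
  assumes pk: "is_packing X v k F" and "G \<subseteq> F"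
  shows "is_packing X v k G"
  unfolding is_packing_def
proof (intro conjI ballI impI)
  fix x y assume "x \<in> X" "y \<in> X" "x \<noteq> y"
  then have "card {B \<in> F. x \<in> B \<and> y \<in> B} \<le> 1" using pk unfolding is_packing_def by blast
  moreover have "card {B \<in> G. x \<in> B \<and> y \<in> B} \<le> card {B \<in> F. x \<in> B \<and> y \<in> B}"
    using \<open>G \<subseteq> F\<close> is_packing_finite[OF pk] by (intro card_mono) auto
  ultimately show "card {B \<in> G. x \<in> B \<and> y \<in> B} \<le> 1" by linarith
qed (use assms in \<open>auto simp: is_packing_def\<close>)

lemma is_packingI:
  assumes "finite X" "card X = v" "\<And>B. B \<in> F \<Longrightarrow> B \<subseteq> X \<and> card B = k"
    and "pairwise (\<lambda>B C. card (B \<inter> C) \<le> 1) F"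
  shows "is_packing X v k F"
proof -
  have "finite F" using assms(1,3) by (blast intro: finite_subset[of F "Pow X"])
  have pair: "card {B \<in> F. x \<in> B \<and> y \<in> B} \<le> 1" if "x \<noteq> y" for x y
  proof -
    have "B = C" if "B \<in> F" "C \<in> F" "{x, y} \<subseteq> B \<inter> C" for B C
    proof (rule ccontr)
      assume "B \<noteq> C"
      have "card {x, y} \<le> card (B \<inter> C)"
        using assms(1,3) that by (meson card_mono finite_Int finite_subset)
      then show False using assms(4) that \<open>B \<noteq> C\<close> \<open>x \<noteq> y\<close> by (auto dest: pairwiseD)
    qed
    with \<open>finite F\<close> show ?thesis by (auto simp: card_le_Suc0_iff_eq)
  qed
  show ?thesis
    unfolding is_packing_def using assms(1-3) pair by (intro conjI ballI impI) auto
qed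

lemma finite_ppc_sizes: "finite F \<Longrightarrow> finite {card P | P. is_ppc F P}"
  by (rule finite_subset[of _ "card ` Pow F"]) (auto simp: is_ppc_def)

lemma ppc_card_le_1_if_intersecting:
  assumes "is_ppc F P" "finite F" "pairwise (\<lambda>B C. B \<inter> C \<noteq> {}) F"
  shows "card P \<le> 1"
proof -
  have "P \<subseteq> F" using assms(1) unfolding is_ppc_def by blast
  have "B = C" if "B \<in> P" "C \<in> P" for B C
  proof (rule ccontr)
    assume "B \<noteq> C"
    then have "B \<inter> C = {}" using assms(1) that unfolding is_ppc_def by blast
    moreover have "B \<inter> C \<noteq> {}" using assms(3) \<open>P \<subseteq> F\<close> that \<open>B \<noteq> C\<close> by (auto dest: pairwiseD)
    ultimately show False by simp
  qed
  then show ?thesis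
    using card_le_Suc0_iff_eq[OF finite_subset[OF \<open>P \<subseteq> F\<close> assms(2)]] by simp
qed

lemma max_ppc_size_eq_1_iff:
  assumes "finite F"
  shows "max_ppc_size F = 1 \<longleftrightarrow> F \<noteq> {} \<and> pairwise (\<lambda>B C. B \<inter> C \<noteq> {}) F"
proof
  assume max: "max_ppc_size F = 1"
  have ppc_le: "card P \<le> 1" if "is_ppc F P" for P
  proof -
    have "card P \<le> max_ppc_size F"
      unfolding max_ppc_size_def using that by (intro Max_ge finite_ppc_sizes assms) blast
    then show ?thesis using max by simp
  qed
  have "pairwise (\<lambda>B C. B \<inter> C \<noteq> {}) F"
  proof (rule pairwiseI, rule notI)
    fix B C assume "B \<in> F" "C \<in> F" "B \<noteq> C" "B \<inter> C = {}"
    then have "is_ppc F {B, C}" by (auto simp: is_ppc_def)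
    then show False using ppc_le[of "{B, C}"] \<open>B \<noteq> C\<close> by simp
  qed
  moreover have "F \<noteq> {}"
  proof -
    have "is_ppc F {}" by (simp add: is_ppc_def)
    then have "max_ppc_size F \<in> {card P | P. is_ppc F P}"
      unfolding max_ppc_size_def by (intro Max_in finite_ppc_sizes assms) blast
    then obtain P where "is_ppc F P" "card P = 1" using max by auto
    then show ?thesis unfolding is_ppc_def by auto
  qed
  ultimately show "F \<noteq> {} \<and> pairwise (\<lambda>B C. B \<inter> C \<noteq> {}) F" by blast
next
  assume "F \<noteq> {} \<and> pairwise (\<lambda>B C. B \<inter> C \<noteq> {}) F"
  then obtain B where "B \<in> F" and intersecting: "pairwise (\<lambda>B C. B \<inter> C \<noteq> {}) F" by blast
  have "is_ppc F {B}" using \<open>B \<in> F\<close> by (simp add: is_ppc_def)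
  then have "card {B} \<in> {card P | P. is_ppc F P}" by blast
  then have "1 \<in> {card P | P. is_ppc F P}" by simp
  moreover have "s \<le> 1" if "s \<in> {card P | P. is_ppc F P}" for s
    using that ppc_card_le_1_if_intersecting[OF _ assms intersecting] by blast
  ultimately show "max_ppc_size F = 1"
    unfolding max_ppc_size_def by (rule Max_eqI[OF finite_ppc_sizes[OF assms], rotated])
qed

definition point_degree :: "'a set set \<Rightarrow> 'a \<Rightarrow> nat" where
  "point_degree F x = card {B \<in> F. x \<in> B}"

lemma packing_star_card_le:
  assumes pk: "is_packing X v k F" and "x \<in> X" and through_x: "\<forall>B\<in>F. x \<in> B"
  shows "(k - 1) * card F \<le> v - 1"
proof -
  have finX: "finite X" and cardX: "card X = v"
    and blocks: "\<And>B. B \<in> F \<Longrightarrow> B \<subseteq> X \<and> card B = k"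
    using pk unfolding is_packing_def by auto
  note finB = is_packing_finite_block[OF pk]
  have disjoint: "(B - {x}) \<inter> (C - {x}) = {}" if "B \<in> F" "C \<in> F" "B \<noteq> C" for B C
  proof -
    have "card (B \<inter> C) \<le> 1" "x \<in> B \<inter> C" "finite (B \<inter> C)"
      using is_packing_card_Int_le_1[OF pk that] through_x that finB by auto
    then show ?thesis by (auto simp: card_le_Suc0_iff_eq)
  qed
  have "(k - 1) * card F = (\<Sum>B\<in>F. card (B - {x}))"
    using blocks through_x finB by (simp add: card_Diff_singleton)
  also have "\<dots> = card (\<Union>B\<in>F. B - {x})"
    using is_packing_finite[OF pk] finB disjoint by (intro card_UN_disjoint[symmetric]) auto
  also have "\<dots> \<le> card (X - {x})"
    using blocks finX by (intro card_mono) auto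
  also have "\<dots> = v - 1" using \<open>x \<in> X\<close> cardX finX by simp
  finally show ?thesis .
qed

lemma intersecting_packing_point_degree_le:
  assumes pk: "is_packing X v k F" and intersecting: "pairwise (\<lambda>B C. B \<inter> C \<noteq> {}) F"
    and "B \<in> F" "x \<notin> B"
  shows "point_degree F x \<le> k"
proof -
  let ?Fx = "{C \<in> F. x \<in> C}"
  have "\<exists>y. y \<in> C \<inter> B" if "C \<in> ?Fx" for C
    using intersecting \<open>B \<in> F\<close> \<open>x \<notin> B\<close> that unfolding pairwise_def by blast
  then obtain f where f: "\<And>C. C \<in> ?Fx \<Longrightarrow> f C \<in> C \<inter> B" by metis
  have "inj_on f ?Fx"
  proof (rule inj_onI, rule ccontr)
    fix C C' assume C: "C \<in> ?Fx" "C' \<in> ?Fx" "f C = f C'" "C \<noteq> C'"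
    have "x \<noteq> f C" using f[OF C(1)] \<open>x \<notin> B\<close> by blast
    moreover have "{x, f C} \<subseteq> C \<inter> C'" using f[of C] f[of C'] C(1-3) by auto
    moreover have "finite (C \<inter> C')" using is_packing_finite_block[OF pk] C(1) by blast
    ultimately have "2 \<le> card (C \<inter> C')" by (metis card_2_iff card_mono)
    then show False using is_packing_card_Int_le_1[OF pk] C by fastforce
  qed
  then have "card ?Fx \<le> card B"
    using f is_packing_finite_block[OF pk \<open>B \<in> F\<close>] by (intro card_inj_on_le) auto
  then show ?thesis using pk \<open>B \<in> F\<close> unfolding point_degree_def is_packing_def by auto
qed

lemma intersecting_packing_card_le:
  assumes pk: "is_packing X v k F" and intersecting: "pairwise (\<lambda>B C. B \<inter> C \<noteq> {}) F"
    and no_common_point: "\<forall>x. \<exists>C\<in>F. x \<notin> C" and "B \<in> F"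
  shows "card F \<le> k * (k - 1) + 1"
proof -
  have finF: "finite F" by (rule is_packing_finite[OF pk])
  have "F - {B} \<subseteq> (\<Union>y\<in>B. {C \<in> F. y \<in> C} - {B})"
    using intersecting \<open>B \<in> F\<close> unfolding pairwise_def by blast
  then have "card (F - {B}) \<le> card (\<Union>y\<in>B. {C \<in> F. y \<in> C} - {B})"
    using finF by (intro card_mono) (auto intro: rev_finite_subset[OF finF])
  also have "\<dots> \<le> (\<Sum>y\<in>B. card ({C \<in> F. y \<in> C} - {B}))"
    using is_packing_finite_block[OF pk \<open>B \<in> F\<close>] by (rule card_UN_le)
  also have "\<dots> \<le> (\<Sum>y\<in>B. k - 1)"
  proof (rule sum_mono)
    fix y assume "y \<in> B"
    obtain C where "C \<in> F" "y \<notin> C" using no_common_point by blast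
    then have "point_degree F y \<le> k"
      by (rule intersecting_packing_point_degree_le[OF pk intersecting])
    then show "card ({C \<in> F. y \<in> C} - {B}) \<le> k - 1"
      using \<open>y \<in> B\<close> \<open>B \<in> F\<close> finF by (simp add: point_degree_def card_Diff_singleton)
  qed
  also have "\<dots> = k * (k - 1)" using pk \<open>B \<in> F\<close> unfolding is_packing_def by simp
  finally show ?thesis using card.remove[OF finF \<open>B \<in> F\<close>] by simp
qed

lemma intersecting_packing_card_le_cases:
  assumes pk: "is_packing X v k F" and "max_ppc_size F = 1"
  shows "card F \<le> k * (k - 1) + 1 \<or> (k - 1) * card F \<le> v - 1"
proof -
  obtain B where "B \<in> F" and intersecting: "pairwise (\<lambda>B C. B \<inter> C \<noteq> {}) F"
    using iffD1[OF max_ppc_size_eq_1_iff[OF is_packing_finite[OF pk]] assms(2)] by blast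
  show ?thesis
  proof (cases "\<exists>x. \<forall>C\<in>F. x \<in> C")
    case True
    then obtain x where x: "\<forall>C\<in>F. x \<in> C" by blast
    moreover have "x \<in> X" using x \<open>B \<in> F\<close> pk unfolding is_packing_def by blast
    ultimately show ?thesis using packing_star_card_le[OF pk] by blast
  next
    case False
    then show ?thesis using intersecting_packing_card_le[OF pk intersecting _ \<open>B \<in> F\<close>] by blast
  qed
qed

text \<open>(d - m)(d - m - 1) \<ge> 0, the integer rounding in the second moment bound.\<close>
lemma mult_le_square_add_consecutive: "(2 * m + 1) * d \<le> d * d + m * (m + 1)" for d m :: nat
proof (cases "d \<le> m")
  case True
  then obtain j where "m = d + j" using le_Suc_ex by blast
  then show ?thesis by (simp add: algebra_simps)
next
  case False
  then obtain j where "d = m + 1 + j"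
    by (metis add.commute add_Suc less_imp_Suc_add not_le plus_1_eq_Suc)
  then show ?thesis by (simp add: algebra_simps)
qed

lemma point_degree_eq_sum: "finite F \<Longrightarrow> point_degree F x = (\<Sum>B\<in>F. of_bool (x \<in> B))"
  by (simp add: point_degree_def Int_def)

lemma sum_of_bool_mem: "finite X \<Longrightarrow> B \<subseteq> X \<Longrightarrow> (\<Sum>x\<in>X. of_bool (x \<in> B)) = card B"
  by (simp add: Int_absorb1)

lemma sum_point_degree:
  assumes "finite X" "finite F" "\<forall>B\<in>F. B \<subseteq> X"
  shows "(\<Sum>x\<in>X. point_degree F x) = (\<Sum>B\<in>F. card B)"
proof -
  have "(\<Sum>x\<in>X. point_degree F x) = (\<Sum>B\<in>F. \<Sum>x\<in>X. of_bool (x \<in> B))"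
    using assms(2) by (simp only: point_degree_eq_sum sum.swap[where A = X])
  also have "\<dots> = (\<Sum>B\<in>F. card B)" using assms by (intro sum.cong refl sum_of_bool_mem) auto
  finally show ?thesis .
qed

lemma sum_point_degree_squared:
  assumes "finite X" "finite F" "\<forall>B\<in>F. B \<subseteq> X"
  shows "(\<Sum>x\<in>X. point_degree F x ^ 2) = (\<Sum>B\<in>F. \<Sum>C\<in>F. card (B \<inter> C))"
proof -
  have "(\<Sum>x\<in>X. point_degree F x ^ 2) = (\<Sum>x\<in>X. \<Sum>B\<in>F. \<Sum>C\<in>F. of_bool (x \<in> B \<inter> C))"
    using assms(2)
    by (simp only: point_degree_eq_sum power2_eq_square sum_product
        of_bool_conj[symmetric] Int_iff[symmetric])
  also have "\<dots> = (\<Sum>B\<in>F. \<Sum>C\<in>F. \<Sum>x\<in>X. of_bool (x \<in> B \<inter> C))"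
    by (simp only: sum.swap[where A = X])
  also have "\<dots> = (\<Sum>B\<in>F. \<Sum>C\<in>F. card (B \<inter> C))"
    using assms by (intro sum.cong refl sum_of_bool_mem) auto
  finally show ?thesis .
qed

lemma packing_card_bound:
  assumes pk: "is_packing X v k F"
  shows "(2 * m + 1) * (k * card F) \<le> card F * (card F + k - 1) + v * (m * (m + 1))"
proof -
  have finX: "finite X" and cardX: "card X = v" and blocks: "\<forall>B\<in>F. B \<subseteq> X \<and> card B = k"
    and finF: "finite F"
    using pk is_packing_finite[OF pk] unfolding is_packing_def by auto
  have "(\<Sum>B\<in>F. \<Sum>C\<in>F. card (B \<inter> C)) \<le> (\<Sum>B\<in>F. \<Sum>C\<in>F. if C = B then k else 1)"
    using is_packing_card_Int_le_1[OF pk] blocks by (intro sum_mono) auto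
  also have "\<dots> = (\<Sum>B\<in>F. card F + k - 1)"
  proof (rule sum.cong[OF refl])
    fix B assume "B \<in> F"
    then have "0 < card F" using finF card_gt_0_iff by blast
    from \<open>B \<in> F\<close> have "(\<Sum>C\<in>F. if C = B then k else 1) = k + (\<Sum>C\<in>F - {B}. 1)"
      using finF by (simp add: sum.remove)
    also have "\<dots> = card F + k - 1"
      using \<open>B \<in> F\<close> \<open>0 < card F\<close> finF by (simp add: card_Diff_singleton)
    finally show "(\<Sum>C\<in>F. if C = B then k else 1) = card F + k - 1" .
  qed
  finally have squares: "(\<Sum>x\<in>X. point_degree F x ^ 2) \<le> card F * (card F + k - 1)"
    using sum_point_degree_squared[OF finX finF] blocks by simp
  have "(2 * m + 1) * (k * card F) = (2 * m + 1) * (\<Sum>x\<in>X. point_degree F x)"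
    using sum_point_degree[OF finX finF] blocks by simp
  also have "\<dots> = (\<Sum>x\<in>X. (2 * m + 1) * point_degree F x)"
    by (rule sum_distrib_left)
  also have "\<dots> \<le> (\<Sum>x\<in>X. point_degree F x ^ 2 + m * (m + 1))"
    by (intro sum_mono) (simp only: power2_eq_square mult_le_square_add_consecutive)
  also have "\<dots> = (\<Sum>x\<in>X. point_degree F x ^ 2) + v * (m * (m + 1))"
    using cardX by (simp add: sum.distrib)
  finally show ?thesis using squares by linarith
qed

lemma packing_card_less:
  assumes "is_packing X v k F" and "n * (n + k - 1) + v * (m * (m + 1)) < (2 * m + 1) * (k * n)"
  shows "card F < n"
proof (rule ccontr)
  assume "\<not> card F < n"
  then obtain G where "G \<subseteq> F" "card G = n" by (metis not_less obtain_subset_with_card_n)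
  then show False
    using packing_card_bound[OF is_packing_subset[OF assms(1) \<open>G \<subseteq> F\<close>], of m] assms(2) by simp
qed

lemma sorted_wrt_irrefl_imp_distinct:
  "sorted_wrt P xs \<Longrightarrow> (\<And>x. x \<in> set xs \<Longrightarrow> \<not> P x x) \<Longrightarrow> distinct xs"
  by (induction xs) auto

lemma sorted_wrt_symp_imp_pairwise: "sorted_wrt P xs \<Longrightarrow> symp P \<Longrightarrow> pairwise P (set xs)"
  by (induction xs) (auto simp: pairwise_insert dest: sympD)

lemma intersecting_packingI:
  assumes "finite X" "card X = v" "\<And>B. B \<in> F \<Longrightarrow> B \<subseteq> X \<and> card B = k" "F \<noteq> {}"
    and "pairwise (\<lambda>B C. card (B \<inter> C) = 1) F"
  shows "is_packing X v k F \<and> max_ppc_size F = 1"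
proof
  have "pairwise (\<lambda>B C. card (B \<inter> C) \<le> 1) F" using assms(5) by (rule pairwise_mono) auto
  with assms(1-3) show pk: "is_packing X v k F" by (rule is_packingI)
  have "pairwise (\<lambda>B C. B \<inter> C \<noteq> {}) F" using assms(5) by (rule pairwise_mono) auto
  then show "max_ppc_size F = 1"
    using assms(4) max_ppc_size_eq_1_iff[OF is_packing_finite[OF pk]] by simp
qed

lemma intersecting_packing_of_list:
  assumes "finite X" "card X = v" "\<forall>B\<in>set xs. B \<subseteq> X \<and> card B = k" "xs \<noteq> []" "k \<noteq> 1"
    and "sorted_wrt (\<lambda>B C. card (B \<inter> C) = 1) xs"
  shows "is_packing X v k (set xs) \<and> max_ppc_size (set xs) = 1 \<and> card (set xs) = length xs"
proof -
  have "distinct xs"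
    by (rule sorted_wrt_irrefl_imp_distinct[OF assms(6)]) (use assms(3,5) in auto)
  moreover have "pairwise (\<lambda>B C. card (B \<inter> C) = 1) (set xs)"
    using assms(6) by (rule sorted_wrt_symp_imp_pairwise) (auto intro: sympI simp: Int_commute)
  ultimately show ?thesis
    using intersecting_packingI[OF assms(1,2)] assms(3,4) by (simp add: distinct_card)
qed

lemma star_intersecting_packing:
  assumes "0 < n" "3 * n < v"
  shows "\<exists>F. is_packing {..<v} v 4 F \<and> max_ppc_size F = 1 \<and> card F = n"
proof -
  define block where "block i = {0, 3 * i + 1, 3 * i + 2, 3 * i + 3}" for i :: nat
  have "inj_on block {..<n}" by (rule inj_onI) (auto simp: block_def)
  moreover have "is_packing {..<v} v 4 (block ` {..<n}) \<and> max_ppc_size (block ` {..<n}) = 1"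
  proof (rule intersecting_packingI)
    show "B \<subseteq> {..<v} \<and> card B = 4" if "B \<in> block ` {..<n}" for B
      using that assms(2) by (auto simp: block_def)
    have "block i \<inter> block j = {0}" if "i \<noteq> j" for i j
      using that by (auto simp: block_def)
    then show "pairwise (\<lambda>B C. card (B \<inter> C) = 1) (block ` {..<n})"
      by (intro pairwise_imageI) simp
  qed (use assms(1) in auto)
  ultimately show ?thesis by (auto simp: card_image)
qed

text \<open>The lines of the projective plane of order 3, developed from the planar difference set
  {0, 1, 3, 9} modulo 13.\<close>
definition PG23 :: "nat set list" where
  "PG23 = map (\<lambda>i. (\<lambda>x. (x + i) mod 13) ` {0, 1, 3, 9}) [0..<13]"

text \<open>The points are the ten edges of K5 and the blocks its five vertex stars; two stars share
  exactly one edge.\<close>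
definition K5_stars :: "nat set list" where
  "K5_stars = [{0, 1, 2, 3}, {0, 4, 5, 6}, {1, 4, 7, 8}, {2, 5, 7, 9}, {3, 6, 8, 9}]"

definition small_intersecting_family :: "nat \<Rightarrow> nat set list" where
  "small_intersecting_family v =
    (if v \<le> 6 then take 1 K5_stars else if v \<le> 8 then take 2 K5_stars
     else if v = 9 then take 3 K5_stars else if v = 10 then K5_stars
     else filter (\<lambda>B. B \<subseteq> {..<v}) PG23)"

lemma PG23_intersecting: "sorted_wrt (\<lambda>B C. card (B \<inter> C) = 1) PG23"
  by (simp add: PG23_def upt_conv_Cons)

lemma PG23_blocks: "length PG23 = 13" "\<forall>B\<in>set PG23. B \<subseteq> {..<13} \<and> card B = 4"
  by (simp_all add: PG23_def upt_conv_Cons)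

lemma K5_stars_intersecting: "sorted_wrt (\<lambda>B C. card (B \<inter> C) = 1) K5_stars"
  by (simp add: K5_stars_def)

lemma small_intersecting_family_intersecting:
  "sorted_wrt (\<lambda>B C. card (B \<inter> C) = 1) (small_intersecting_family v)"
  unfolding small_intersecting_family_def
  using PG23_intersecting K5_stars_intersecting by (simp add: sorted_wrt_take sorted_wrt_filter)

lemma nat_cases_4_13:
  fixes v :: nat
  assumes "4 \<le> v" "v \<le> 13"
  obtains "v = 4" | "v = 5" | "v = 6" | "v = 7" | "v = 8" | "v = 9" | "v = 10" | "v = 11"
    | "v = 12" | "v = 13"
proof -
  have "v = 4 \<or> v = 5 \<or> v = 6 \<or> v = 7 \<or> v = 8 \<or> v = 9 \<or> v = 10 \<or> v = 11
      \<or> v = 12 \<or> v = 13"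
    using assms by presburger
  then show ?thesis using that by blast
qed

lemma small_intersecting_family_blocks:
  assumes "4 \<le> v" "v \<le> 13"
  shows "small_intersecting_family v \<noteq> []"
    and "\<forall>B\<in>set (small_intersecting_family v). B \<subseteq> {..<v} \<and> card B = 4"
  using assms
  by (cases rule: nat_cases_4_13;
      simp add: small_intersecting_family_def K5_stars_def PG23_def upt_conv_Cons)+

lemma small_intersecting_family_optimal:
  assumes "4 \<le> v" "v \<le> 13" and pk: "is_packing X v 4 F"
  shows "card F \<le> length (small_intersecting_family v)"
proof -
  define n where "n = length (small_intersecting_family v) + 1"
  define m where "m = 4 * n div v" \<comment> \<open>the average point degree, rounded down\<close>
  have "n * (n + 4 - 1) + v * (m * (m + 1)) < (2 * m + 1) * (4 * n)"
    using assms(1,2) unfolding m_def n_def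
    by (cases rule: nat_cases_4_13;
        simp add: small_intersecting_family_def K5_stars_def PG23_def upt_conv_Cons)
  then show ?thesis using packing_card_less[OF pk] unfolding n_def by fastforce
qed

lemma beta_eqI:
  assumes "\<And>F. is_packing {..<v} v k F \<Longrightarrow> max_ppc_size F = \<rho> \<Longrightarrow> card F \<le> n"
    and "is_packing {..<v} v k F" "max_ppc_size F = \<rho>" "card F = n"
  shows "beta \<rho> v k = n"
proof -
  let ?S = "{card \<B> |\<B>. is_packing {..<v} v k \<B> \<and> max_ppc_size \<B> = \<rho>}"
  have "?S \<subseteq> {..n}" using assms(1) by auto
  moreover have "n \<in> ?S" using assms(2-4) by blast
  ultimately show ?thesis
    unfolding beta_def by (intro Max_eqI) (auto intro: finite_subset)
qed

lemma D_eqI: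
  assumes "\<And>F. is_packing {..<v} v k F \<Longrightarrow> card F \<le> n"
    and "is_packing {..<v} v k F" "card F = n"
  shows "D v k = n"
proof -
  let ?S = "{card \<B> |\<B>. is_packing {..<v} v k \<B>}"
  have "?S \<subseteq> {..n}" using assms(1) by auto
  moreover have "n \<in> ?S" using assms(2-3) by blast
  ultimately show ?thesis
    unfolding D_def by (intro Max_eqI) (auto intro: finite_subset)
qed

lemma beta_1_4_eq_D_4:
  assumes "4 \<le> v" "v \<le> 13"
  shows "beta 1 v 4 = D v 4"
proof -
  let ?F = "set (small_intersecting_family v)"
  have F: "is_packing {..<v} v 4 ?F \<and> max_ppc_size ?F = 1
      \<and> card ?F = length (small_intersecting_family v)"
    using small_intersecting_family_blocks[OF assms] small_intersecting_family_intersecting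
    by (intro intersecting_packing_of_list) auto
  have "beta 1 v 4 = length (small_intersecting_family v)"
    using F small_intersecting_family_optimal[OF assms] by (intro beta_eqI) auto
  moreover have "D v 4 = length (small_intersecting_family v)"
    using F small_intersecting_family_optimal[OF assms] by (intro D_eqI) auto
  ultimately show ?thesis by simp
qed

lemma intersecting_packing_4_card_le:
  "is_packing X v 4 F \<Longrightarrow> max_ppc_size F = 1 \<Longrightarrow> card F \<le> 13 \<or> 3 * card F \<le> v - 1"
  using intersecting_packing_card_le_cases[of X v 4 F] by simp

lemma beta_1_4_medium:
  assumes "14 \<le> v" "v \<le> 39"
  shows "beta 1 v 4 = 13"
proof (rule beta_eqI)
  show "card F \<le> 13" if "is_packing {..<v} v 4 F" "max_ppc_size F = 1" for F
    using intersecting_packing_4_card_le[OF that] assms(2) by linarith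
  have "\<forall>B\<in>set PG23. B \<subseteq> {..<v} \<and> card B = 4" using PG23_blocks(2) assms(1) by fastforce
  moreover have "PG23 \<noteq> []" using PG23_blocks(1) by auto
  ultimately have "is_packing {..<v} v 4 (set PG23) \<and> max_ppc_size (set PG23) = 1
      \<and> card (set PG23) = length PG23"
    by (intro intersecting_packing_of_list PG23_intersecting) auto
  then show "is_packing {..<v} v 4 (set PG23)" and "max_ppc_size (set PG23) = 1"
    and "card (set PG23) = 13"
    using PG23_blocks(1) by auto
qed

lemma beta_1_4_large:
  assumes "40 \<le> v"
  shows "beta 1 v 4 = (v - 1) div 3"
proof -
  have "0 < (v - 1) div 3" "3 * ((v - 1) div 3) < v" using assms by presburger+
  then obtain F where "is_packing {..<v} v 4 F" "max_ppc_size F = 1" "card F = (v - 1) div 3"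
    using star_intersecting_packing by blast
  then show ?thesis
    using intersecting_packing_4_card_le assms by (intro beta_eqI) fastforce+
qed

theorem theorem4p1:
  fixes v :: nat
  assumes "v \<ge> 4"
  shows "beta 1 v 4 = (if v \<le> 13 then D v 4 else if v \<le> 39 then 13 else (v - 1) div 3)"
proof -
  consider "v \<le> 13" | "14 \<le> v" "v \<le> 39" | "40 \<le> v" by linarith
  then show ?thesis
    by cases (use assms beta_1_4_eq_D_4 beta_1_4_medium beta_1_4_large in simp_all)
qed

end
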